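(* Let $G$ be a locally compact group, $X$ a proper $G$-space, $H$ a compact subgroup of $G$, and $S\subset X$ a global $H$-slice of $X$ which is a small subset of $X$. Then: (1) the restriction $f:G\times S\to X$, $f(g,s)=gs$, of the action is an open map; (2) the restriction $p:S\to X/G$ of the orbit map $X\to X/G$ is an open map.
   Context: All spaces are completely regular Hausdorff. A $G$-space is a space $X$ with a continuous action $G\times X\to X$, $(g,x)\mapsto gx$, with $ex=x$ and $(gh)x=g(hx)$. For $S\subset X$ and a subgroup $H\subset G$, $H(S)=\{hs\mid h\in H, s\in S\}$; $X/G$ is the orbit space with the quotient topology. For a closed subgroup $H\subset G$, a subset $S\subset X$ is an $H$-slice in $X$ if: (i) $H(S)=S$; (ii) $S$ is closed in $G(S)$; (iii) if $g\in G\setminus H$ then $gS\cap S=\emptyset$; (iv) $G(S)$ is open in $X$. It is a global $H$-slice if moreover $G(S)=X$. For $U,V\subset X$ the transporter is $\langle U,V\rangle=\{g\in G\mid gU\cap V\neq\emptyset\}$; $U$ and $V$ are thin relative to each other if $\langle U,V\rangle$ has compact closure in $G$. A subset $U\subset X$ is small if every point of $X$ has a neighborhood thin relative to $U$. For $G$ locally compact, a $G$-space $X$ is proper if every point of $X$ has a small neighborhood. *)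

theory Defs
  imports "HOL-Analysis.Analysis" "HOL-Algebra.Group"
begin

definition topological_group :: "('g, 'm) monoid_scheme \<Rightarrow> 'g topology \<Rightarrow> bool" where
  "topological_group G T \<longleftrightarrow> group G \<and> topspace T = carrier G \<and>
     continuous_map (prod_topology T T) T (\<lambda>(g, h). g \<otimes>\<^bsub>G\<^esub> h) \<and>
     continuous_map T T (\<lambda>g. inv\<^bsub>G\<^esub> g)"

definition G_space :: "('g, 'm) monoid_scheme \<Rightarrow> 'g topology \<Rightarrow> 'x topology \<Rightarrow> ('g \<Rightarrow> 'x \<Rightarrow> 'x) \<Rightarrow> bool" where
  "G_space G T X act \<longleftrightarrow>
     continuous_map (prod_topology T X) X (\<lambda>(g, x). act g x) \<and>
     (\<forall>x\<in>topspace X. act \<one>\<^bsub>G\<^esub> x = x) \<and>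
     (\<forall>g\<in>carrier G. \<forall>h\<in>carrier G. \<forall>x\<in>topspace X. act (g \<otimes>\<^bsub>G\<^esub> h) x = act g (act h x))"

definition set_act :: "('g \<Rightarrow> 'x \<Rightarrow> 'x) \<Rightarrow> 'g set \<Rightarrow> 'x set \<Rightarrow> 'x set" where
  "set_act act A S = {act h s | h s. h \<in> A \<and> s \<in> S}"

definition transporter :: "('g, 'm) monoid_scheme \<Rightarrow> ('g \<Rightarrow> 'x \<Rightarrow> 'x) \<Rightarrow> 'x set \<Rightarrow> 'x set \<Rightarrow> 'g set" where
  "transporter G act U V = {g \<in> carrier G. act g ` U \<inter> V \<noteq> {}}"

definition thin :: "('g, 'm) monoid_scheme \<Rightarrow> 'g topology \<Rightarrow> ('g \<Rightarrow> 'x \<Rightarrow> 'x) \<Rightarrow> 'x set \<Rightarrow> 'x set \<Rightarrow> bool" where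
  "thin G T act U V \<longleftrightarrow> compactin T (T closure_of (transporter G act U V))"

definition small :: "('g, 'm) monoid_scheme \<Rightarrow> 'g topology \<Rightarrow> 'x topology \<Rightarrow> ('g \<Rightarrow> 'x \<Rightarrow> 'x) \<Rightarrow> 'x set \<Rightarrow> bool" where
  "small G T X act U \<longleftrightarrow>
     (\<forall>x\<in>topspace X. \<exists>N. N \<subseteq> topspace X \<and> x \<in> X interior_of N \<and> thin G T act N U)"

text \<open>Proper G-space (G locally compact is assumed separately): every point has a small neighbourhood.\<close>
definition proper_G_space :: "('g, 'm) monoid_scheme \<Rightarrow> 'g topology \<Rightarrow> 'x topology \<Rightarrow> ('g \<Rightarrow> 'x \<Rightarrow> 'x) \<Rightarrow> bool" where
  "proper_G_space G T X act \<longleftrightarrow>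
     (\<forall>x\<in>topspace X. \<exists>N. N \<subseteq> topspace X \<and> x \<in> X interior_of N \<and> small G T X act N)"

definition slice :: "('g, 'm) monoid_scheme \<Rightarrow> 'g topology \<Rightarrow> 'x topology \<Rightarrow> ('g \<Rightarrow> 'x \<Rightarrow> 'x) \<Rightarrow> 'g set \<Rightarrow> 'x set \<Rightarrow> bool" where
  "slice G T X act H S \<longleftrightarrow>
     subgroup H G \<and> closedin T H \<and> S \<subseteq> topspace X \<and>
     set_act act H S = S \<and>
     closedin (subtopology X (set_act act (carrier G) S)) S \<and>
     (\<forall>g \<in> carrier G - H. act g ` S \<inter> S = {}) \<and>
     openin X (set_act act (carrier G) S)"

definition global_slice :: "('g, 'm) monoid_scheme \<Rightarrow> 'g topology \<Rightarrow> 'x topology \<Rightarrow> ('g \<Rightarrow> 'x \<Rightarrow> 'x) \<Rightarrow> 'g set \<Rightarrow> 'x set \<Rightarrow> bool" where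
  "global_slice G T X act H S \<longleftrightarrow> slice G T X act H S \<and> set_act act (carrier G) S = topspace X"

definition orbit :: "('g, 'm) monoid_scheme \<Rightarrow> ('g \<Rightarrow> 'x \<Rightarrow> 'x) \<Rightarrow> 'x \<Rightarrow> 'x set" where
  "orbit G act x = set_act act (carrier G) {x}"

definition orbit_space :: "('g, 'm) monoid_scheme \<Rightarrow> 'x topology \<Rightarrow> ('g \<Rightarrow> 'x \<Rightarrow> 'x) \<Rightarrow> 'x set topology" where
  "orbit_space G X act = topology (\<lambda>U. U \<subseteq> orbit G act ` topspace X \<and>
      openin X {x \<in> topspace X. orbit G act x \<in> U})"

end

theory Submission
  imports Defs
begin

text \<open>
  Let \<open>U\<close> be open in \<open>G \<times> S\<close> and \<open>x = g\<^sub>0 s\<^sub>0\<close> with \<open>(g\<^sub>0, s\<^sub>0) \<in> U\<close>. A point \<open>y\<close> near \<open>x\<close> is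
  \<open>y = g s\<close> with \<open>s \<in> S\<close>, and \<open>g\<inverse>\<close> lies in the transporter \<open>\<langle>N, S\<rangle>\<close> of a neighbourhood \<open>N\<close> of
  \<open>x\<close> thin relative to \<open>S\<close>, whose closure \<open>K\<close> is compact. For each single \<open>k \<in> K\<close>, the slice
  property (\<open>k g\<^sub>0 \<in> H\<close> as soon as \<open>k x \<in> S\<close>) and continuity show that \<open>y \<in> f(U)\<close> whenever
  \<open>(a, y)\<close> is near \<open>(k, x)\<close> and \<open>a y \<in> S\<close>; the tube lemma over the compact set \<open>K\<close> makes the
  neighbourhood of \<open>x\<close> uniform in \<open>k\<close>, so \<open>f(U)\<close> is open. The saturation of an open
  \<open>V \<subseteq> S\<close> is \<open>f(G \<times> V)\<close>, so (2) follows from (1).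
\<close>

lemma istopology_quotient:
  "istopology (\<lambda>U. U \<subseteq> q ` topspace X \<and> openin X {x \<in> topspace X. q x \<in> U})"
  unfolding istopology_def
proof (rule conjI; intro allI impI)
  fix U V
  assume "U \<subseteq> q ` topspace X \<and> openin X {x \<in> topspace X. q x \<in> U}"
    and "V \<subseteq> q ` topspace X \<and> openin X {x \<in> topspace X. q x \<in> V}"
  moreover have "{x \<in> topspace X. q x \<in> U \<inter> V} =
      {x \<in> topspace X. q x \<in> U} \<inter> {x \<in> topspace X. q x \<in> V}"
    by auto
  ultimately show "U \<inter> V \<subseteq> q ` topspace X \<and> openin X {x \<in> topspace X. q x \<in> U \<inter> V}"
    by auto
next
  fix \<K>
  assume "\<forall>K\<in>\<K>. K \<subseteq> q ` topspace X \<and> openin X {x \<in> topspace X. q x \<in> K}"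
  moreover have "{x \<in> topspace X. q x \<in> \<Union>\<K>} = (\<Union>K\<in>\<K>. {x \<in> topspace X. q x \<in> K})"
    by auto
  ultimately show "\<Union>\<K> \<subseteq> q ` topspace X \<and> openin X {x \<in> topspace X. q x \<in> \<Union>\<K>}"
    by auto
qed

lemma openin_orbit_space:
  assumes "U \<subseteq> orbit G act ` topspace X"
  shows "openin (orbit_space G X act) U \<longleftrightarrow> openin X {x \<in> topspace X. orbit G act x \<in> U}"
  using assms unfolding orbit_space_def topology_inverse'[OF istopology_quotient] by simp

lemma orbit_eq_image: "orbit G act x = (\<lambda>g. act g x) ` carrier G"
  by (auto simp: orbit_def set_act_def)

locale topological_group_action = group G for G (structure) +
  fixes T :: "'g topology" and X :: "'x topology" and act :: "'g \<Rightarrow> 'x \<Rightarrow> 'x"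
  assumes topological_group: "topological_group G T"
    and G_space: "G_space G T X act"
begin

lemma topspace_eq_carrier: "topspace T = carrier G"
  using topological_group unfolding topological_group_def by simp

lemma continuous_map_action: "continuous_map (prod_topology T X) X (\<lambda>(g, x). act g x)"
  using G_space unfolding G_space_def by simp

lemma continuous_map_group_mult:
  assumes "continuous_map Z T f" "continuous_map Z T g"
  shows "continuous_map Z T (\<lambda>z. f z \<otimes> g z)"
proof -
  have "continuous_map (prod_topology T T) T (\<lambda>(g, h). g \<otimes> h)"
    using topological_group unfolding topological_group_def by simp
  from continuous_map_compose[OF continuous_map_pairedI[OF assms] this] show ?thesis
    by (simp add: o_def)
qed

lemma continuous_map_group_inv:
  assumes "continuous_map Z T f"
  shows "continuous_map Z T (\<lambda>z. inv (f z))"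
proof -
  have "continuous_map T T (\<lambda>g. inv g)"
    using topological_group unfolding topological_group_def by simp
  from continuous_map_compose[OF assms this] show ?thesis
    by (simp add: o_def)
qed

lemma continuous_map_act:
  assumes "continuous_map Z T f" "continuous_map Z X g"
  shows "continuous_map Z X (\<lambda>z. act (f z) (g z))"
  using continuous_map_compose[OF continuous_map_pairedI[OF assms] continuous_map_action]
  by (simp add: o_def)

lemma act_closed:
  assumes "g \<in> carrier G" "x \<in> topspace X"
  shows "act g x \<in> topspace X"
proof -
  have "(g, x) \<in> topspace (prod_topology T X)"
    using assms by (simp add: topspace_eq_carrier)
  then show ?thesis
    using continuous_map_image_subset_topspace[OF continuous_map_action] by fastforce
qed

lemma act_mult:
  "g \<in> carrier G \<Longrightarrow> h \<in> carrier G \<Longrightarrow> x \<in> topspace X \<Longrightarrow> act (g \<otimes> h) x = act g (act h x)"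
  using G_space unfolding G_space_def by simp

lemma act_one: "x \<in> topspace X \<Longrightarrow> act \<one> x = x"
  using G_space unfolding G_space_def by simp

lemma act_inv_act: "g \<in> carrier G \<Longrightarrow> x \<in> topspace X \<Longrightarrow> act (inv g) (act g x) = x"
  by (simp flip: act_mult add: act_one)

lemma act_act_inv: "g \<in> carrier G \<Longrightarrow> x \<in> topspace X \<Longrightarrow> act g (act (inv g) x) = x"
  by (simp flip: act_mult add: act_one)

lemma orbit_act_subset:
  assumes g: "g \<in> carrier G" and x: "x \<in> topspace X"
  shows "orbit G act (act g x) \<subseteq> orbit G act x"
proof
  fix y assume "y \<in> orbit G act (act g x)"
  then obtain h where h: "h \<in> carrier G" and y: "y = act h (act g x)"
    unfolding orbit_eq_image by blast
  then have "y = act (h \<otimes> g) x"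
    using g x by (simp add: act_mult)
  with m_closed[OF h g] show "y \<in> orbit G act x"
    unfolding orbit_eq_image by blast
qed

lemma orbit_act:
  assumes g: "g \<in> carrier G" and x: "x \<in> topspace X"
  shows "orbit G act (act g x) = orbit G act x"
proof
  show "orbit G act (act g x) \<subseteq> orbit G act x"
    using orbit_act_subset[OF g x] .
  have "orbit G act (act (inv g) (act g x)) \<subseteq> orbit G act (act g x)"
    using g x by (intro orbit_act_subset) (simp_all add: act_closed)
  then show "orbit G act x \<subseteq> orbit G act (act g x)"
    using g x by (simp add: act_inv_act)
qed

lemma mem_orbit_self: "x \<in> topspace X \<Longrightarrow> x \<in> orbit G act x"
  unfolding orbit_eq_image by (metis act_one image_eqI one_closed)

lemma orbit_saturation_eq_act_image:
  assumes "V \<subseteq> topspace X"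
  shows "{x \<in> topspace X. orbit G act x \<in> orbit G act ` V} = (\<lambda>(g, v). act g v) ` (carrier G \<times> V)"
proof (intro equalityI subsetI)
  fix x assume "x \<in> {x \<in> topspace X. orbit G act x \<in> orbit G act ` V}"
  then obtain v where x: "x \<in> topspace X" and v: "v \<in> V" and "orbit G act x = orbit G act v"
    by blast
  then have "x \<in> orbit G act v"
    using mem_orbit_self[OF x] by simp
  then obtain g where "g \<in> carrier G" "x = act g v"
    unfolding orbit_eq_image by blast
  with v show "x \<in> (\<lambda>(g, v). act g v) ` (carrier G \<times> V)"
    by (intro image_eqI[of _ _ "(g, v)"]) simp_all
next
  fix x assume "x \<in> (\<lambda>(g, v). act g v) ` (carrier G \<times> V)"
  then obtain g v where g: "g \<in> carrier G" and v: "v \<in> V" and x: "x = act g v"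
    by auto
  have "v \<in> topspace X"
    using v assms by blast
  then have "x \<in> topspace X" and "orbit G act x = orbit G act v"
    using g by (simp_all add: x act_closed orbit_act)
  with v show "x \<in> {x \<in> topspace X. orbit G act x \<in> orbit G act ` V}"
    by auto
qed

lemma open_map_orbit_of_open_map_act:
  assumes "open_map (prod_topology T (subtopology X S)) X (\<lambda>(g, s). act g s)"
  shows "open_map (subtopology X S) (orbit_space G X act) (orbit G act)"
  unfolding open_map_def
proof (intro allI impI)
  fix V assume V: "openin (subtopology X S) V"
  then have VX: "V \<subseteq> topspace X"
    using openin_subset by fastforce
  have "openin (prod_topology T (subtopology X S)) (carrier G \<times> V)"
    using V by (simp add: openin_prod_Times_iff flip: topspace_eq_carrier)
  with assms have "openin X ((\<lambda>(g, s). act g s) ` (carrier G \<times> V))"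
    unfolding open_map_def by blast
  with VX show "openin (orbit_space G X act) (orbit G act ` V)"
    by (simp add: openin_orbit_space image_mono orbit_saturation_eq_act_image)
qed

lemma continuous_map_transport_pair:
  assumes "h \<in> carrier G"
  shows "continuous_map (prod_topology T X) (prod_topology T X)
           (\<lambda>(a, y). (inv a \<otimes> h, act (inv h) (act a y)))"
proof -
  have "continuous_map (prod_topology T X) T (\<lambda>p. inv (fst p) \<otimes> h)"
    by (intro continuous_map_group_mult continuous_map_group_inv continuous_map_fst)
      (simp_all add: topspace_eq_carrier assms)
  moreover have "continuous_map (prod_topology T X) X (\<lambda>p. act (inv h) (act (fst p) (snd p)))"
    by (intro continuous_map_act continuous_map_fst continuous_map_snd)
      (simp_all add: topspace_eq_carrier assms)
  ultimately show ?thesis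
    unfolding case_prod_unfold by (rule continuous_map_pairedI)
qed

text \<open>
  The pair \<open>(a\<inverse> h, h\<inverse> a y)\<close> depends continuously on \<open>(a, y)\<close>, equals \<open>(g\<^sub>0, s\<^sub>0)\<close> at
  \<open>(k, g\<^sub>0 s\<^sub>0)\<close>, lies in \<open>U\<close> whenever \<open>a y \<in> S\<close> and is mapped to \<open>y\<close> by the action.
\<close>
lemma mem_interior_transport_via_subgroup:
  assumes H: "subgroup H G" and S_invariant: "\<And>h s. h \<in> H \<Longrightarrow> s \<in> S \<Longrightarrow> act h s \<in> S"
    and A: "openin T A" and B: "openin X B" and AB_U: "A \<times> (B \<inter> S) \<subseteq> U"
    and g0: "g0 \<in> A" and s0: "s0 \<in> B" and k: "k \<in> carrier G" and h: "k \<otimes> g0 \<in> H"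
  shows "(k, act g0 s0) \<in> prod_topology T X interior_of
           {(a, y). act a y \<in> S \<longrightarrow> y \<in> (\<lambda>(g, s). act g s) ` U}"
    (is "_ \<in> _ interior_of ?P")
proof -
  define h where "h = k \<otimes> g0"
  have g0_carrier: "g0 \<in> carrier G" and s0_X: "s0 \<in> topspace X"
    using openin_subset[OF A] openin_subset[OF B] g0 s0 topspace_eq_carrier by auto
  have h_carrier: "h \<in> carrier G" and inv_h: "inv h \<in> H"
    using k g0_carrier H h by (simp_all add: h_def subgroup.m_inv_closed)
  define \<phi> where "\<phi> = (\<lambda>(a, y). (inv a \<otimes> h, act (inv h) (act a y)))"
  let ?W = "{p \<in> topspace (prod_topology T X). \<phi> p \<in> A \<times> B}"
  have "continuous_map (prod_topology T X) (prod_topology T X) \<phi>"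
    unfolding \<phi>_def using h_carrier by (rule continuous_map_transport_pair)
  moreover have "openin (prod_topology T X) (A \<times> B)"
    using A B by (simp add: openin_prod_Times_iff)
  ultimately have W_open: "openin (prod_topology T X) ?W"
    by (rule openin_continuous_map_preimage)
  have W_sub: "?W \<subseteq> ?P"
  proof (rule subsetI)
    fix p assume p: "p \<in> ?W"
    then obtain a y where p_eq: "p = (a, y)" and a: "a \<in> carrier G" and y: "y \<in> topspace X"
      by (cases p) (simp add: topspace_eq_carrier)
    have "y \<in> (\<lambda>(g, s). act g s) ` U" if ay: "act a y \<in> S"
    proof (rule image_eqI)
      show "y = (\<lambda>(g, s). act g s) (inv a \<otimes> h, act (inv h) (act a y))"
        using a y h_carrier by (simp add: act_mult act_closed act_act_inv act_inv_act)
      have "inv a \<otimes> h \<in> A" "act (inv h) (act a y) \<in> B"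
        using p by (simp_all add: p_eq \<phi>_def)
      moreover have "act (inv h) (act a y) \<in> S"
        using S_invariant[OF inv_h ay] .
      ultimately show "(inv a \<otimes> h, act (inv h) (act a y)) \<in> U"
        using AB_U by blast
    qed
    then show "p \<in> ?P"
      by (simp add: p_eq)
  qed
  have "inv k \<otimes> h = g0"
    using k g0_carrier by (simp add: h_def flip: m_assoc)
  moreover have "act (inv h) (act k (act g0 s0)) = s0"
    using k g0_carrier s0_X act_inv_act[OF h_carrier s0_X] by (simp add: h_def act_mult)
  ultimately have "(k, act g0 s0) \<in> ?W"
    using g0 s0 act_closed g0_carrier k s0_X by (simp add: \<phi>_def topspace_eq_carrier)
  then show ?thesis
    by (rule subsetD[OF interior_of_maximal[OF W_sub W_open]])
qed

lemma mem_interior_transport_into_image: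
  assumes S_closed: "closedin X S" and H: "subgroup H G"
    and S_invariant: "\<And>h s. h \<in> H \<Longrightarrow> s \<in> S \<Longrightarrow> act h s \<in> S"
    and S_disjoint: "\<And>g. g \<in> carrier G - H \<Longrightarrow> act g ` S \<inter> S = {}"
    and U: "openin (prod_topology T (subtopology X S)) U" and g0s0: "(g0, s0) \<in> U"
    and k: "k \<in> carrier G"
  shows "(k, act g0 s0) \<in> prod_topology T X interior_of
           {(a, y). act a y \<in> S \<longrightarrow> y \<in> (\<lambda>(g, s). act g s) ` U}"
    (is "_ \<in> _ interior_of ?P")
proof -
  obtain A B' where A: "openin T A" and B': "openin (subtopology X S) B'" and "g0 \<in> A" "s0 \<in> B'"
    and "A \<times> B' \<subseteq> U"
    using U g0s0 unfolding openin_prod_topology_alt by meson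
  moreover obtain B where B: "openin X B" and "B' = B \<inter> S"
    using B' unfolding openin_subtopology by blast
  ultimately have g0: "g0 \<in> A" and s0: "s0 \<in> B" "s0 \<in> S" and AB_U: "A \<times> (B \<inter> S) \<subseteq> U"
    by auto
  have g0_carrier: "g0 \<in> carrier G" and s0_X: "s0 \<in> topspace X"
    using openin_subset[OF A] openin_subset[OF B] g0 s0 topspace_eq_carrier by auto
  show ?thesis
  proof (cases "act k (act g0 s0) \<in> S")
    case False
    let ?W = "{p \<in> topspace (prod_topology T X). (\<lambda>(a, y). act a y) p \<in> topspace X - S}"
    have "openin X (topspace X - S)"
      using S_closed by (simp add: closedin_def)
    then have W_open: "openin (prod_topology T X) ?W"
      by (rule openin_continuous_map_preimage[OF continuous_map_action])
    have W_sub: "?W \<subseteq> ?P"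
      by auto
    have "(k, act g0 s0) \<in> ?W"
      using False act_closed g0_carrier k s0_X topspace_eq_carrier by simp
    then show ?thesis
      by (rule subsetD[OF interior_of_maximal[OF W_sub W_open]])
  next
    case True
    have "k \<otimes> g0 \<in> H"
    proof (rule ccontr)
      assume "k \<otimes> g0 \<notin> H"
      then have "act (k \<otimes> g0) ` S \<inter> S = {}"
        using S_disjoint k g0_carrier by simp
      moreover have "act (k \<otimes> g0) s0 \<in> S"
        using True s0_X k g0_carrier by (simp add: act_mult)
      ultimately show False
        using s0 by blast
    qed
    then show ?thesis
      using mem_interior_transport_via_subgroup[OF H S_invariant A B AB_U g0 s0(1) k] by blast
  qed
qed

lemma open_nbhd_transport_into_image:
  assumes S_closed: "closedin X S" and H: "subgroup H G"
    and S_invariant: "\<And>h s. h \<in> H \<Longrightarrow> s \<in> S \<Longrightarrow> act h s \<in> S"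
    and S_disjoint: "\<And>g. g \<in> carrier G - H \<Longrightarrow> act g ` S \<inter> S = {}"
    and U: "openin (prod_topology T (subtopology X S)) U" and g0s0: "(g0, s0) \<in> U"
    and K: "compactin T K"
  obtains Q where "openin X Q" "act g0 s0 \<in> Q"
    and "\<And>a y. a \<in> K \<Longrightarrow> y \<in> Q \<Longrightarrow> act a y \<in> S \<Longrightarrow> y \<in> (\<lambda>(g, s). act g s) ` U"
proof -
  let ?P = "{(a, y). act a y \<in> S \<longrightarrow> y \<in> (\<lambda>(g, s). act g s) ` U}"
  have "(g0, s0) \<in> topspace (prod_topology T (subtopology X S))"
    using openin_subset[OF U] g0s0 by blast
  then have x_X: "act g0 s0 \<in> topspace X"
    by (auto simp: topspace_eq_carrier act_closed)
  have "K \<subseteq> carrier G"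
    using compactin_subset_topspace[OF K] topspace_eq_carrier by simp
  then have "K \<times> {act g0 s0} \<subseteq> prod_topology T X interior_of ?P"
    using mem_interior_transport_into_image[OF S_closed H S_invariant S_disjoint U g0s0] by auto
  from tube_lemma_left[OF openin_interior_of K x_X this]
  obtain V Q where Q: "openin X Q" "act g0 s0 \<in> Q" and "K \<subseteq> V"
    and VQ: "V \<times> Q \<subseteq> prod_topology T X interior_of ?P"
    by blast
  have "(a, y) \<in> ?P" if "a \<in> K" "y \<in> Q" for a y
  proof (rule subsetD[OF interior_of_subset])
    show "(a, y) \<in> prod_topology T X interior_of ?P"
      using that \<open>K \<subseteq> V\<close> VQ by blast
  qed
  with Q show thesis
    using that by blast
qed

lemma open_map_act_global_slice:
  assumes slice: "global_slice G T X act H S" and small: "small G T X act S"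
  shows "open_map (prod_topology T (subtopology X S)) X (\<lambda>(g, s). act g s)"
  unfolding open_map_def
proof (intro allI impI)
  fix U assume U: "openin (prod_topology T (subtopology X S)) U"
  have H: "subgroup H G" and S_X: "S \<subseteq> topspace X"
    and S_invariant: "\<And>h s. h \<in> H \<Longrightarrow> s \<in> S \<Longrightarrow> act h s \<in> S"
    and S_disjoint: "\<And>g. g \<in> carrier G - H \<Longrightarrow> act g ` S \<inter> S = {}"
    and GS: "set_act act (carrier G) S = topspace X"
    and S_closed: "closedin X S"
    using slice unfolding global_slice_def slice_def set_act_def by (auto simp: set_eq_iff)
  have "\<exists>W. openin X W \<and> x \<in> W \<and> W \<subseteq> (\<lambda>(g, s). act g s) ` U"
    if x_image: "x \<in> (\<lambda>(g, s). act g s) ` U" for x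
  proof -
    obtain g0 s0 where g0s0: "(g0, s0) \<in> U" and x: "x = act g0 s0"
      using x_image by auto
    have "x \<in> topspace X"
      using x_image openin_subset[OF U] by (auto simp: topspace_eq_carrier act_closed)
    then obtain N where N_X: "N \<subseteq> topspace X" and x_N: "x \<in> X interior_of N"
      and thin: "thin G T act N S"
      using small unfolding small_def by blast
    define K where "K = T closure_of transporter G act N S"
    obtain Q where Q: "openin X Q" "x \<in> Q"
      and KQ: "\<And>a y. a \<in> K \<Longrightarrow> y \<in> Q \<Longrightarrow> act a y \<in> S \<Longrightarrow> y \<in> (\<lambda>(g, s). act g s) ` U"
      using open_nbhd_transport_into_image[OF S_closed H S_invariant S_disjoint U g0s0, of K] thin
      unfolding thin_def K_def x by blast
    have "X interior_of N \<inter> Q \<subseteq> (\<lambda>(g, s). act g s) ` U"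
    proof
      fix y assume y: "y \<in> X interior_of N \<inter> Q"
      then have y_N: "y \<in> N"
        using interior_of_subset[of X N] by blast
      then have "y \<in> set_act act (carrier G) S"
        using N_X by (auto simp: GS)
      then obtain g s where g: "g \<in> carrier G" and s: "s \<in> S" and y_eq: "y = act g s"
        unfolding set_act_def by blast
      have inv_g_y: "act (inv g) y = s"
        using g s S_X by (simp add: y_eq act_inv_act subset_iff)
      from y_N s inv_g_y inv_closed[OF g] have "inv g \<in> transporter G act N S"
        unfolding transporter_def by blast
      moreover have "transporter G act N S \<subseteq> topspace T"
        by (auto simp: transporter_def topspace_eq_carrier)
      ultimately have "inv g \<in> K"
        unfolding K_def using closure_of_subset by blast
      then show "y \<in> (\<lambda>(g, s). act g s) ` U"
        using KQ y inv_g_y s by blast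
    qed
    moreover have "openin X (X interior_of N \<inter> Q)"
      using Q by (simp add: openin_Int)
    ultimately show ?thesis
      using Q x_N by blast
  qed
  then show "openin X ((\<lambda>(g, s). act g s) ` U)"
    using openin_subopen by blast
qed

end

theorem theorem2p1:
  fixes G :: "('g, 'm) monoid_scheme" and T :: "'g topology"
    and X :: "'x topology" and act :: "'g \<Rightarrow> 'x \<Rightarrow> 'x"
    and H :: "'g set" and S :: "'x set"
  assumes "topological_group G T" "Hausdorff_space T" "completely_regular_space T"
    and "locally_compact_space T"
    and "Hausdorff_space X" "completely_regular_space X"
    and "G_space G T X act" "proper_G_space G T X act"
    and "subgroup H G" "compactin T H"
    and "global_slice G T X act H S" "small G T X act S"
  shows "open_map (prod_topology T (subtopology X S)) X (\<lambda>(g, s). act g s) \<and>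
         open_map (subtopology X S) (orbit_space G X act) (orbit G act)"
proof -
  interpret topological_group_action G T X act
    using assms(1,7) unfolding topological_group_action_def topological_group_action_axioms_def
    by (simp add: topological_group_def)
  have "open_map (prod_topology T (subtopology X S)) X (\<lambda>(g, s). act g s)"
    using open_map_act_global_slice assms(11,12) .
  then show ?thesis
    using open_map_orbit_of_open_map_act by blast
qed

end
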